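(* Property (A) holds if and only if there exists a map $M\colon\mathbb R^n\to\mathbb R^{n\times n}$ such that $f(z)=M(z)\eta(z)$ and $M(z)\preceq 0$ for all $z\in\mathbb R^n$. Moreover, property (A) holds if all of the following hold: - $f$ and $\eta$ are continuously differentiable; - $\eta\colon\mathbb R^n\to\mathbb R^n$ is bijective; - $f(\eta^{-1}(0))=0$; - $D\eta(z)$ is invertible for all $z\in\mathbb R^n$; - $Df(z)\,D\eta(z)^{-1}\preceq 0$ for all $z\in\mathbb R^n$.
   Context: Setting. Let $n,m$ be positive integers. Let $\mathcal H\colon\mathbb R^n\to\mathbb R$ be continuously differentiable with $\mathcal H\ge 0$, and set $\eta\coloneq\nabla\mathcal H\colon\mathbb R^n\to\mathbb R^n$. Let $f\colon\mathbb R^n\to\mathbb R^n$ and $B\colon\mathbb R^n\to\mathbb R^{n\times m}$. Consider the system $\dot z = f(z)+B(z)u$, $y=B(z)^{\mathsf T}\eta(z)$. Notation. For a square matrix $A$ (not necessarily symmetric), $A\preceq 0$ means $x^{\mathsf T}Ax\le 0$ for all $x\in\mathbb R^n$. $Dg(z)$ denotes the Jacobian of $g$ at $z$. Property (A): there exist maps $J,R\colon\mathbb R^n\to\mathbb R^{n\times n}$ such that, for all $z\in\mathbb R^n$, $J(z)=-J(z)^{\mathsf T}$, $R(z)=R(z)^{\mathsf T}$ is positive semidefinite, and $f(z)=(J(z)-R(z))\eta(z)$. *)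

theory Defs
  imports "HOL-Analysis.Analysis"
begin

definition nsd :: "real^'n^'n \<Rightarrow> bool" where
  "nsd A \<longleftrightarrow> (\<forall>x. x \<bullet> (A *v x) \<le> 0)"

definition psd :: "real^'n^'n \<Rightarrow> bool" where
  "psd A \<longleftrightarrow> (\<forall>x. 0 \<le> x \<bullet> (A *v x))"

definition propA :: "(real^'n \<Rightarrow> real^'n) \<Rightarrow> (real^'n \<Rightarrow> real^'n) \<Rightarrow> bool" where
  "propA f \<eta> \<longleftrightarrow> (\<exists>J R :: real^'n \<Rightarrow> real^'n^'n. \<forall>z.
      transpose (J z) = - J z \<and> transpose (R z) = R z \<and> psd (R z) \<and>
      f z = (J z - R z) *v \<eta> z)"

end

theory Submission
  imports Defs
begin

text \<open>A matrix is negative semidefinite exactly when it is a skew-symmetric matrix minus a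
  symmetric positive semidefinite one (its skew and negated symmetric parts), which gives the
  characterisation of property (A). For the sufficient condition put \<open>g = f \<circ> \<eta>\<^sup>-\<^sup>1\<close>: its
  Jacobian \<open>Df \<cdot> D\<eta>\<^sup>-\<^sup>1\<close> is negative semidefinite and \<open>g 0 = 0\<close>, so \<open>t \<mapsto> w \<bullet> g (t w)\<close> is
  nonincreasing and \<open>\<eta> z \<bullet> f z \<le> 0\<close>. A vector \<open>v\<close> with \<open>w \<bullet> v \<le> 0\<close> is always the image of
  \<open>w\<close> under some negative semidefinite matrix, which yields the factor \<open>M z\<close>.\<close>

lemma matrix_mul_matrix_inv:
  fixes A :: "real^'n^'n"
  assumes "invertible A"
  shows "A ** matrix_inv A = mat 1"
proof -
  have "\<exists>A'. A ** A' = mat 1 \<and> A' ** A = mat 1"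
    using assms by (simp add: invertible_def)
  from someI_ex[OF this] show ?thesis
    unfolding matrix_inv_def by blast
qed

lemma quadratic_form_transpose:
  fixes A :: "real^'n^'n"
  shows "x \<bullet> (transpose A *v x) = x \<bullet> (A *v x)"
  by (metis dot_lmul_matrix inner_commute transpose_matrix_vector)

lemma quadratic_form_skew_eq_0:
  fixes J :: "real^'n^'n"
  assumes "transpose J = - J"
  shows "x \<bullet> (J *v x) = 0"
proof -
  have "x \<bullet> (J *v x) = x \<bullet> ((- J) *v x)"
    using quadratic_form_transpose[of x J] assms by simp
  also have "\<dots> = - (x \<bullet> (J *v x))"
    by (metis diff_0 inner_minus_right matrix_vector_mult_0 matrix_vector_mult_diff_rdistrib)
  finally show ?thesis by simp
qed

lemma nsd_skew_minus_psd:
  fixes J R :: "real^'n^'n"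
  assumes "transpose J = - J" and "psd R"
  shows "nsd (J - R)"
  unfolding nsd_def
proof
  fix x :: "real^'n"
  have "x \<bullet> ((J - R) *v x) = x \<bullet> (J *v x) - x \<bullet> (R *v x)"
    by (simp add: matrix_vector_mult_diff_rdistrib inner_diff_right)
  then show "x \<bullet> ((J - R) *v x) \<le> 0"
    using quadratic_form_skew_eq_0[OF assms(1)] assms(2) by (simp add: psd_def)
qed

lemma nsd_skew_minus_psd_decomposition:
  fixes M :: "real^'n^'n"
  assumes "nsd M"
  shows "\<exists>J R. transpose J = - J \<and> transpose R = R \<and> psd R \<and> M = J - R"
proof (intro exI conjI)
  let ?J = "(1/2::real) *\<^sub>R (M - transpose M)"
  let ?R = "(-1/2::real) *\<^sub>R (M + transpose M)"
  show "transpose ?J = - ?J" "transpose ?R = ?R" "M = ?J - ?R"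
    by (simp_all add: transpose_def vec_eq_iff algebra_simps)
  show "psd ?R" unfolding psd_def
  proof
    fix x :: "real^'n"
    have "x \<bullet> (?R *v x) = (-1/2) * (x \<bullet> (M *v x) + x \<bullet> (transpose M *v x))"
      by (simp only: scaleR_matrix_vector_assoc[symmetric] matrix_vector_mult_add_rdistrib
          inner_scaleR_right inner_add_right)
    also have "\<dots> = - (x \<bullet> (M *v x))"
      unfolding quadratic_form_transpose by simp
    finally show "0 \<le> x \<bullet> (?R *v x)"
      using assms by (simp add: nsd_def)
  qed
qed

lemma propA_iff_nsd_factorization:
  fixes f \<eta> :: "real^'n \<Rightarrow> real^'n"
  shows "propA f \<eta> \<longleftrightarrow> (\<exists>M :: real^'n \<Rightarrow> real^'n^'n. \<forall>z. f z = M z *v \<eta> z \<and> nsd (M z))"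
proof
  assume "propA f \<eta>"
  then obtain J R :: "real^'n \<Rightarrow> real^'n^'n" where "\<forall>z.
      transpose (J z) = - J z \<and> transpose (R z) = R z \<and> psd (R z) \<and> f z = (J z - R z) *v \<eta> z"
    unfolding propA_def by blast
  then have "\<forall>z. f z = (J z - R z) *v \<eta> z \<and> nsd (J z - R z)"
    by (simp add: nsd_skew_minus_psd)
  then show "\<exists>M. \<forall>z. f z = M z *v \<eta> z \<and> nsd (M z)"
    by (rule exI[of _ "\<lambda>z. J z - R z"])
next
  assume "\<exists>M :: real^'n \<Rightarrow> real^'n^'n. \<forall>z. f z = M z *v \<eta> z \<and> nsd (M z)"
  then obtain M :: "real^'n \<Rightarrow> real^'n^'n" where M: "\<forall>z. f z = M z *v \<eta> z \<and> nsd (M z)" ..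
  have "\<forall>z. \<exists>J R. transpose J = - J \<and> transpose R = R \<and> psd R \<and> f z = (J - R) *v \<eta> z"
    using M nsd_skew_minus_psd_decomposition by metis
  then show "propA f \<eta>"
    unfolding propA_def by metis
qed

text \<open>The witness is \<open>M x = ((w \<bullet> x) v - (v \<bullet> x) w) / |w|\<^sup>2 + (w \<bullet> v)(w \<bullet> x) w / |w|\<^sup>4\<close>: a skew
  part sending \<open>w\<close> to the component of \<open>v\<close> orthogonal to \<open>w\<close>, plus a nonpositive multiple of
  the projection onto \<open>w\<close>.\<close>
lemma nsd_matrix_mapping_exists:
  fixes w v :: "real^'n"
  assumes "w \<bullet> v \<le> 0" and "w = 0 \<Longrightarrow> v = 0"
  shows "\<exists>M :: real^'n^'n. M *v w = v \<and> nsd M"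
proof (cases "w = 0")
  case True
  then show ?thesis
    using assms by (intro exI[of _ 0]) (simp add: nsd_def)
next
  case False
  define a where "a = w \<bullet> w"
  have "a > 0"
    using False by (simp add: a_def)
  define L where "L x = ((w \<bullet> x) / a) *\<^sub>R v - ((v \<bullet> x) / a) *\<^sub>R w + ((w \<bullet> v) * (w \<bullet> x) / a\<^sup>2) *\<^sub>R w"
    for x
  have "linear L"
    by (rule linearI) (simp_all add: L_def inner_add_right algebra_simps add_divide_distrib)
  then have matrix_L: "matrix L *v x = L x" for x
    by (simp add: matrix_works linear_matrix_vector_mul_eq)
  have "matrix L *v w = v"
    using \<open>a > 0\<close> by (simp add: matrix_L L_def a_def[symmetric] inner_commute power2_eq_square)
  moreover have "nsd (matrix L)"
    unfolding nsd_def
  proof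
    fix x :: "real^'n"
    have "x \<bullet> (matrix L *v x) = (w \<bullet> v) * (w \<bullet> x)\<^sup>2 / a\<^sup>2"
      by (simp add: matrix_L L_def inner_diff_right inner_add_right inner_commute power2_eq_square)
    also have "\<dots> \<le> 0"
      using assms(1) by (intro divide_nonpos_nonneg mult_nonpos_nonneg) auto
    finally show "x \<bullet> (matrix L *v x) \<le> 0" .
  qed
  ultimately show ?thesis by blast
qed

lemma inner_nonpos_if_nsd_jacobian:
  fixes g :: "real^'n \<Rightarrow> real^'n" and G :: "real^'n \<Rightarrow> real^'n^'n"
  assumes g_deriv: "\<And>x. (g has_derivative (\<lambda>v. G x *v v)) (at x)"
    and G_nsd: "\<And>x. nsd (G x)"
    and "g 0 = 0"
  shows "w \<bullet> g w \<le> 0"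
proof -
  define \<phi> where "\<phi> t = w \<bullet> g (t *\<^sub>R w)" for t :: real
  have "\<phi> 1 \<le> \<phi> 0"
  proof (rule DERIV_nonpos_imp_nonincreasing[of 0 1 \<phi>])
    fix t :: real
    have "((\<lambda>t. t *\<^sub>R w) has_derivative (\<lambda>s. s *\<^sub>R w)) (at t)"
      by (intro derivative_eq_intros) auto
    from has_derivative_inner_right[OF has_derivative_compose[OF this g_deriv], of w]
    have "(\<phi> has_derivative (\<lambda>s. w \<bullet> (G (t *\<^sub>R w) *v (s *\<^sub>R w)))) (at t)"
      by (simp add: \<phi>_def[abs_def])
    moreover have "(\<lambda>s. w \<bullet> (G (t *\<^sub>R w) *v (s *\<^sub>R w))) = (*) (w \<bullet> (G (t *\<^sub>R w) *v w))"
      by (simp add: fun_eq_iff matrix_vector_mult_scaleR)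
    ultimately have "DERIV \<phi> t :> w \<bullet> (G (t *\<^sub>R w) *v w)"
      by (simp add: has_field_derivative_def)
    moreover have "w \<bullet> (G (t *\<^sub>R w) *v w) \<le> 0"
      using G_nsd by (simp add: nsd_def)
    ultimately show "\<exists>D. DERIV \<phi> t :> D \<and> D \<le> 0" by blast
  qed simp
  then show ?thesis
    using \<open>g 0 = 0\<close> by (simp add: \<phi>_def)
qed

lemma has_derivative_inv_bij:
  fixes \<eta> :: "real^'n \<Rightarrow> real^'n" and D\<eta> :: "real^'n \<Rightarrow> real^'n^'n"
  assumes \<eta>_deriv: "\<And>z. (\<eta> has_derivative (\<lambda>v. D\<eta> z *v v)) (at z)"
    and "bij \<eta>"
    and D\<eta>_invertible: "\<And>z. invertible (D\<eta> z)"
  shows "(inv \<eta> has_derivative (\<lambda>v. matrix_inv (D\<eta> (inv \<eta> w)) *v v)) (at w)"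
proof -
  have "(inv \<eta> has_derivative (\<lambda>v. matrix_inv (D\<eta> (inv \<eta> w)) *v v)) (at (\<eta> (inv \<eta> w)))"
  proof (rule has_derivative_inverse_strong[of UNIV "inv \<eta> w" \<eta>])
    show "continuous_on UNIV \<eta>"
      using \<eta>_deriv by (intro continuous_at_imp_continuous_on) (blast intro: has_derivative_continuous)
    show "inv \<eta> (\<eta> z) = z" for z
      using \<open>bij \<eta>\<close> by (simp add: bij_is_inj)
    show "(\<eta> has_derivative (\<lambda>v. D\<eta> (inv \<eta> w) *v v)) (at (inv \<eta> w))"
      by (rule \<eta>_deriv)
    show "(\<lambda>v. D\<eta> (inv \<eta> w) *v v) \<circ> (\<lambda>v. matrix_inv (D\<eta> (inv \<eta> w)) *v v) = id"
      using matrix_mul_matrix_inv[OF D\<eta>_invertible]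
      by (simp add: fun_eq_iff matrix_vector_mul_assoc)
  qed auto
  then show ?thesis
    using \<open>bij \<eta>\<close> by (simp add: bij_is_surj surj_f_inv_f)
qed

lemma propA_if_nsd_jacobian_product:
  fixes \<eta> f :: "real^'n \<Rightarrow> real^'n" and Df D\<eta> :: "real^'n \<Rightarrow> real^'n^'n"
  assumes f_deriv: "\<And>z. (f has_derivative (\<lambda>v. Df z *v v)) (at z)"
    and \<eta>_deriv: "\<And>z. (\<eta> has_derivative (\<lambda>v. D\<eta> z *v v)) (at z)"
    and "bij \<eta>" and f_zero: "f (inv \<eta> 0) = 0"
    and D\<eta>_invertible: "\<And>z. invertible (D\<eta> z)"
    and nsd_product: "\<And>z. nsd (Df z ** matrix_inv (D\<eta> z))"
  shows "propA f \<eta>"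
proof -
  have inv_\<eta>: "inv \<eta> (\<eta> z) = z" for z
    using \<open>bij \<eta>\<close> by (simp add: bij_is_inj)
  have "((f \<circ> inv \<eta>) has_derivative
      (\<lambda>v. (Df (inv \<eta> w) ** matrix_inv (D\<eta> (inv \<eta> w))) *v v)) (at w)" for w
    using diff_chain_at[OF has_derivative_inv_bij[OF \<eta>_deriv \<open>bij \<eta>\<close> D\<eta>_invertible] f_deriv]
    by (simp add: o_def matrix_vector_mul_assoc)
  from inner_nonpos_if_nsd_jacobian[OF this nsd_product] f_zero
  have "w \<bullet> f (inv \<eta> w) \<le> 0" for w
    by simp
  then have "\<eta> z \<bullet> f z \<le> 0" for z
    using inv_\<eta> by metis
  moreover have "\<eta> z = 0 \<Longrightarrow> f z = 0" for z
    using f_zero inv_\<eta>[of z] by simp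
  ultimately have "\<forall>z. \<exists>M :: real^'n^'n. M *v \<eta> z = f z \<and> nsd M"
    using nsd_matrix_mapping_exists by blast
  then show ?thesis
    unfolding propA_iff_nsd_factorization by metis
qed

theorem mainTheorem3:
  fixes H :: "real^'n \<Rightarrow> real" and \<eta> f :: "real^'n \<Rightarrow> real^'n"
  assumes H_nonneg: "\<forall>z. 0 \<le> H z"
    and H_grad: "\<forall>z. (H has_derivative (\<lambda>v. \<eta> z \<bullet> v)) (at z)"
    and H_C1: "continuous_on UNIV \<eta>"
  shows "(propA f \<eta> \<longleftrightarrow>
           (\<exists>M :: real^'n \<Rightarrow> real^'n^'n. \<forall>z. f z = M z *v \<eta> z \<and> nsd (M z)))
       \<and> (\<forall>(Df :: real^'n \<Rightarrow> real^'n^'n) (D\<eta> :: real^'n \<Rightarrow> real^'n^'n).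
            (\<forall>z. (f has_derivative (\<lambda>v. Df z *v v)) (at z)) \<and> continuous_on UNIV Df \<and>
            (\<forall>z. (\<eta> has_derivative (\<lambda>v. D\<eta> z *v v)) (at z)) \<and> continuous_on UNIV D\<eta> \<and>
            bij \<eta> \<and> f (inv \<eta> 0) = 0 \<and>
            (\<forall>z. invertible (D\<eta> z)) \<and>
            (\<forall>z. nsd (Df z ** matrix_inv (D\<eta> z)))
          \<longrightarrow> propA f \<eta>)"
  using propA_iff_nsd_factorization[of f \<eta>] propA_if_nsd_jacobian_product[of f _ \<eta>] by blast

end
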